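(* Let $d\in\mathbb{Z}$, $d>0$. Every rational solution $(x,y)\in\mathbb{Q}^2$ with $x\neq0$, $y\neq0$ of $$y^2=x^3-d^2x$$ is of one of the forms $$(x_1,y_1)=\left(d\frac{m+e}{m-e},\ \pm2\sqrt{d\frac{em}{m^2-e^2}}\; d\frac{m+e}{m-e}\right),\qquad (x_2,y_2)=\left(-d\frac{m-e}{m+e},\ \mp2\sqrt{d\frac{em}{m^2-e^2}}\; d\frac{m-e}{m+e}\right),$$ where $e,m\in\mathbb{N}$, $m>e$, $\gcd(m,e)=1$, and there exist $k,j\in\mathbb{N}$ with $$d=\left(\frac{k}{2j}\right)^2\frac{m^2-e^2}{em}.$$ *)

theory Defs
  imports Complex_Main
begin

end

theory Submission
  imports Defs
begin

text \<open>
  A rational point with \<open>y \<noteq> 0\<close> has \<open>x (x - d) (x + d) > 0\<close>, so either \<open>x > d\<close> or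
  \<open>-d < x < 0\<close>. Writing \<open>(x - d) / (x + d)\<close>, resp. \<open>(x + d) / (d - x)\<close>, which lies in
  \<open>(0, 1)\<close>, in lowest terms as \<open>e / m\<close> gives the two abscissa formulas. On both branches
  \<open>x\<^sup>3 - d\<^sup>2 x = 4 d e m / (m\<^sup>2 - e\<^sup>2) \<cdot> x\<^sup>2\<close>, so the slope \<open>y / (2 x)\<close> is a rational
  square root of \<open>d e m / (m\<^sup>2 - e\<^sup>2)\<close>: this determines \<open>y\<close> up to sign, and writing the
  slope as \<open>k / (2 j)\<close> gives the stated expression for \<open>d\<close>.
\<close>

lemma rat_square_eq_nat_fraction_square:
  fixes q :: rat
  shows "\<exists>k j :: nat. real_of_rat q ^ 2 = (real k / (2 * real j)) ^ 2"
proof -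
  obtain a b where "quotient_of q = (a, b)" by fastforce
  then have "q = of_int a / of_int b" and "0 < b"
    using quotient_of_div quotient_of_denom_pos by simp_all
  then have "\<bar>real_of_rat q\<bar> = real (2 * nat \<bar>a\<bar>) / (2 * real (nat b))"
    by (simp add: of_rat_divide abs_divide)
  then show ?thesis by (metis power2_abs)
qed

lemma rat_in_unit_interval_eq_coprime_fraction:
  fixes r :: rat
  assumes "0 < r" and "r < 1"
  shows "\<exists>e m :: nat. 0 < e \<and> e < m \<and> coprime m e \<and> r = of_nat e / of_nat m"
proof -
  obtain a b where q: "quotient_of r = (a, b)" by fastforce
  have r: "r = of_int a / of_int b" and b: "0 < b" and "coprime a b"
    using quotient_of_div[OF q] quotient_of_denom_pos[OF q] quotient_of_coprime[OF q] by simp_all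
  moreover from assms r b have "0 < a" "a < b" by (simp_all add: zero_less_divide_iff)
  ultimately have "coprime (nat b) (nat a)" and "r = of_nat (nat a) / of_nat (nat b)"
    by (simp_all flip: coprime_int_iff add: coprime_commute)
  with \<open>0 < a\<close> \<open>a < b\<close> show ?thesis by (intro exI[of _ "nat a"] exI[of _ "nat b"]) simp
qed

lemma congruent_curve_rhs_param:
  fixes D E M X :: "'a::field"
  assumes "M - E \<noteq> 0" and "M + E \<noteq> 0"
    and "X = D * (M + E) / (M - E) \<or> X = - D * (M - E) / (M + E)"
  shows "X ^ 3 - D ^ 2 * X = 4 * (D * (E * M) / (M ^ 2 - E ^ 2)) * X ^ 2"
proof -
  have sq: "M ^ 2 - E ^ 2 = (M - E) * (M + E)" by (simp add: power2_eq_square algebra_simps)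
  \<comment> \<open>\<open>right_minus_eq\<close> is removed so that \<open>M - E\<close> stays a single nonzero factor for \<open>divide_simps\<close>\<close>
  from assms(3) show ?thesis
  proof
    assume "X = D * (M + E) / (M - E)"
    with assms(1,2) show ?thesis unfolding sq by (simp add: divide_simps del: right_minus_eq) algebra
  next
    assume "X = - D * (M - E) / (M + E)"
    with assms(1,2) show ?thesis unfolding sq by (simp add: divide_simps del: right_minus_eq) algebra
  qed
qed

lemma congruent_curve_abscissa_param:
  fixes d x :: rat
  assumes "0 < d" and "0 < x ^ 3 - d ^ 2 * x"
  shows "\<exists>e m :: nat. 0 < e \<and> e < m \<and> coprime m e \<and>
    (x = d * (of_nat m + of_nat e) / (of_nat m - of_nat e) \<or>
     x = - d * (of_nat m - of_nat e) / (of_nat m + of_nat e))"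
proof -
  have "0 < x * ((x - d) * (x + d))"
    using assms(2) by (simp add: power2_eq_square power3_eq_cube algebra_simps)
  with assms(1) have "d < x \<or> - d < x \<and> x < 0"
    by (auto simp: zero_less_mult_iff mult_less_0_iff)
  then show ?thesis
  proof
    assume "d < x"
    then obtain e m :: nat where em: "0 < e" "e < m" "coprime m e"
      and "(x - d) / (x + d) = of_nat e / of_nat m"
      using rat_in_unit_interval_eq_coprime_fraction[of "(x - d) / (x + d)"] assms(1)
      by auto
    then have "x = d * (of_nat m + of_nat e) / (of_nat m - of_nat e)"
      using \<open>d < x\<close> assms(1) by (auto simp: field_simps)
    with em show ?thesis by blast
  next
    assume "- d < x \<and> x < 0"
    then obtain e m :: nat where em: "0 < e" "e < m" "coprime m e"
      and "(x + d) / (d - x) = of_nat e / of_nat m"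
      using rat_in_unit_interval_eq_coprime_fraction[of "(x + d) / (d - x)"] assms(1)
      by auto
    then have "x = - d * (of_nat m - of_nat e) / (of_nat m + of_nat e)"
      using \<open>- d < x \<and> x < 0\<close> by (auto simp: field_simps)
    with em show ?thesis by blast
  qed
qed

lemma congruent_curve_rational_point_param:
  fixes d x y :: rat
  assumes "0 < d" and "y \<noteq> 0" and curve: "y ^ 2 = x ^ 3 - d ^ 2 * x"
  shows "\<exists>e m :: nat. 0 < e \<and> e < m \<and> coprime m e \<and>
    (x = d * (of_nat m + of_nat e) / (of_nat m - of_nat e) \<or>
     x = - d * (of_nat m - of_nat e) / (of_nat m + of_nat e)) \<and>
    (y / (2 * x)) ^ 2 = d * (of_nat e * of_nat m) / (of_nat m ^ 2 - of_nat e ^ 2)"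
proof -
  have "0 < x ^ 3 - d ^ 2 * x" using assms(2) curve by (metis zero_less_power2)
  then obtain e m :: nat where em: "0 < e" "e < m" "coprime m e"
    and x: "x = d * (of_nat m + of_nat e) / (of_nat m - of_nat e) \<or>
            x = - d * (of_nat m - of_nat e) / (of_nat m + of_nat e)"
    using congruent_curve_abscissa_param assms(1) by blast
  have "x \<noteq> 0" using assms(2) curve by auto
  moreover have "y ^ 2 = 4 * (d * (of_nat e * of_nat m) / (of_nat m ^ 2 - of_nat e ^ 2)) * x ^ 2"
    using congruent_curve_rhs_param[OF _ _ x] curve em(2) by simp
  ultimately have "(y / (2 * x)) ^ 2 = d * (of_nat e * of_nat m) / (of_nat m ^ 2 - of_nat e ^ 2)"
    by (simp add: power_divide)
  with em x show ?thesis by blast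
qed

lemma congruent_curve_ordinate_form:
  fixes D E M X Y Q :: real
  assumes "Q \<noteq> 0" and Q2: "Q ^ 2 = D * (E * M) / (M ^ 2 - E ^ 2)" and Y: "Y = 2 * Q * X"
    and X: "X = D * (M + E) / (M - E) \<or> X = - D * (M - E) / (M + E)"
  shows "\<exists>\<sigma> \<in> {1, -1}.
      (X = D * (M + E) / (M - E) \<and> Y = \<sigma> * 2 * sqrt (D * (E * M) / (M ^ 2 - E ^ 2)) * (D * (M + E) / (M - E)))
    \<or> (X = - D * (M - E) / (M + E) \<and> Y = - \<sigma> * 2 * sqrt (D * (E * M) / (M ^ 2 - E ^ 2)) * (D * (M - E) / (M + E)))"
proof -
  have \<sigma>: "sgn Q \<in> {1, -1}" using assms(1) by (simp add: sgn_if)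
  have s: "sqrt (D * (E * M) / (M ^ 2 - E ^ 2)) = \<bar>Q\<bar>" by (metis Q2 real_sqrt_abs)
  have Y': "Y = sgn Q * 2 * \<bar>Q\<bar> * X" unfolding Y by (metis sgn_mult_abs mult.commute mult.left_commute)
  from X show ?thesis
  proof
    assume X: "X = D * (M + E) / (M - E)"
    show ?thesis using \<sigma> by (intro bexI[of _ "sgn Q"] disjI1) (simp_all add: X Y' s)
  next
    assume X: "X = - D * (M - E) / (M + E)"
    show ?thesis using \<sigma> by (intro bexI[of _ "sgn Q"] disjI2) (simp_all add: X Y' s)
  qed
qed

theorem lemma10:
  fixes d :: int and x y :: rat
  assumes "d > 0" and "x \<noteq> 0" and "y \<noteq> 0"
    and "y ^ 2 = x ^ 3 - (of_int d) ^ 2 * x"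
  shows "\<exists>e m :: nat. 0 < e \<and> m > e \<and> gcd m e = 1 \<and>
           (\<exists>k j :: nat. real_of_int d =
               (real k / (2 * real j)) ^ 2 * ((real m ^ 2 - real e ^ 2) / (real e * real m))) \<and>
           (let D = real_of_int d;
                s = sqrt (D * (real e * real m) / (real m ^ 2 - real e ^ 2))
            in \<exists>\<sigma> \<in> {1, -1 :: real}.
                 (real_of_rat x = D * (real m + real e) / (real m - real e) \<and>
                  real_of_rat y = \<sigma> * 2 * s * (D * (real m + real e) / (real m - real e)))
               \<or> (real_of_rat x = - D * (real m - real e) / (real m + real e) \<and>
                  real_of_rat y = - \<sigma> * 2 * s * (D * (real m - real e) / (real m + real e))))"
proof -
  obtain e m :: nat where em: "0 < e" "e < m" "coprime m e"
    and x_param: "x = of_int d * (of_nat m + of_nat e) / (of_nat m - of_nat e) \<or>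
                  x = - of_int d * (of_nat m - of_nat e) / (of_nat m + of_nat e)"
    and slope: "(y / (2 * x)) ^ 2 = of_int d * (of_nat e * of_nat m) / (of_nat m ^ 2 - of_nat e ^ 2)"
    using congruent_curve_rational_point_param[of "of_int d" y x] assms(1,3,4) by auto
  define D X Y Q where "D = real_of_int d" and "X = real_of_rat x"
    and "Y = real_of_rat y" and "Q = real_of_rat (y / (2 * x))"
  have Q_ne: "Q \<noteq> 0" using assms(2,3) by (simp add: Q_def)
  have Q2: "Q ^ 2 = D * (real e * real m) / (real m ^ 2 - real e ^ 2)"
    using arg_cong[OF slope, of real_of_rat] unfolding Q_def D_def
    by (simp add: of_rat_divide of_rat_mult of_rat_diff of_rat_power)
  have Y_eq: "Y = 2 * Q * X" using assms(2) by (simp add: X_def Y_def Q_def of_rat_divide of_rat_mult)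
  from x_param have X_eq: "X = D * (real m + real e) / (real m - real e) \<or>
                           X = - D * (real m - real e) / (real m + real e)"
    unfolding X_def D_def by (auto simp: of_rat_divide of_rat_mult of_rat_add of_rat_diff of_rat_minus)
  obtain k j :: nat where "Q ^ 2 = (real k / (2 * real j)) ^ 2"
    using rat_square_eq_nat_fraction_square unfolding Q_def by blast
  moreover have "D = Q ^ 2 * ((real m ^ 2 - real e ^ 2) / (real e * real m))"
    unfolding Q2 using em(1,2) by (simp add: power_strict_mono)
  ultimately have "\<exists>k j :: nat. D = (real k / (2 * real j)) ^ 2 * ((real m ^ 2 - real e ^ 2) / (real e * real m))"
    by auto
  moreover have "gcd m e = 1" using em(3) by (simp add: coprime_iff_gcd_eq_1)
  ultimately show ?thesis
    using em(1,2) congruent_curve_ordinate_form[OF Q_ne Q2 Y_eq X_eq]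
    unfolding Let_def D_def[symmetric] X_def[symmetric] Y_def[symmetric]
    by - (rule exI[of _ e], rule exI[of _ m], intro conjI)
qed

end
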